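(* Let $n\ge 1$ be an integer and let $\Phi$ be the $n$-dimensional Matérn cluster process with parent intensity $\lambda_{\mathrm p}>0$, daughter intensity $\lambda_{\mathrm d}>0$ and cluster radius $r_{\mathrm d}>0$, and let $F_{R_{\mathrm C}}(r)=\mathbb P(R_{\mathrm C}\le r)$ with $R_{\mathrm C}=\min_{\mathbf z\in\Phi}\|\mathbf z\|$. Then for every $r>0$, \[ 1-\exp\!\left(-v_n\lambda_{\mathrm p}|r-r_{\mathrm d}|^n\left(1-e^{-\lambda_{\mathrm d}v_n\beta(r)^n}\right)\right)\le F_{R_{\mathrm C}}(r)\le 1-\exp\!\left(-v_n\lambda_{\mathrm p}(r+r_{\mathrm d})^n\left(1-e^{-v_n\lambda_{\mathrm d}\beta(r)^n}\right)\right). \]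
   Context: The $n$-dimensional Matérn cluster process: $\Phi_{\mathrm p}=\{\mathbf x_i\}$ is a homogeneous Poisson point process in $\mathbb R^n$ of intensity $\lambda_{\mathrm p}$; each parent $\mathbf x_i$ receives an independent daughter process $\Phi_{\mathrm d}^{(i)}$, a homogeneous Poisson point process of intensity $\lambda_{\mathrm d}$ restricted to the ball $\mathcal B(\mathrm o,r_{\mathrm d})$ centered at the origin, independent of $\Phi_{\mathrm p}$; $\Phi=\bigcup_i(\mathbf x_i+\Phi_{\mathrm d}^{(i)})$. $v_n$ is the volume of the unit ball in $\mathbb R^n$ and $\beta(r)=\min\{r,r_{\mathrm d}\}$. *)

theory Defs
  imports "HOL-Probability.Probability"
begin

definition count_pts :: "'a set \<Rightarrow> 'a set \<Rightarrow> enat" where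
  "count_pts S B = (if finite (S \<inter> B) then enat (card (S \<inter> B)) else \<infinity>)"

definition pp_sets :: "('a::topological_space) set measure" where
  "pp_sets = sigma UNIV {{S. count_pts S B = k} | B k. B \<in> sets borel}"

definition poisson_pp :: "'w measure \<Rightarrow> ('w \<Rightarrow> 'a::topological_space set) \<Rightarrow> 'a measure \<Rightarrow> bool" where
  "poisson_pp M N mu \<longleftrightarrow>
     prob_space M \<and> N \<in> measurable M pp_sets \<and>
     (\<forall>B \<in> sets borel. emeasure mu B < \<infinity> \<longrightarrow>
        (\<forall>k::nat. measure M {\<omega> \<in> space M. count_pts (N \<omega>) B = enat k}
                 = exp (- measure mu B) * measure mu B ^ k / fact k)) \<and>
     (\<forall>(B :: nat \<Rightarrow> 'a set) m. (\<forall>i<m. B i \<in> sets borel \<and> emeasure mu (B i) < \<infinity>) \<and>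
        disjoint_family_on B {..<m} \<longrightarrow>
        prob_space.indep_vars M (\<lambda>_. count_space UNIV) (\<lambda>i \<omega>. count_pts (N \<omega>) (B i)) {..<m})"

definition matern_cluster :: "(nat \<Rightarrow> 'w \<Rightarrow> 'a::real_vector) \<Rightarrow> (nat \<Rightarrow> 'w \<Rightarrow> 'a set) \<Rightarrow> 'w \<Rightarrow> 'a set" where
  "matern_cluster X D \<omega> = (\<Union>i. (\<lambda>y. X i \<omega> + y) ` D i \<omega>)"

definition contact_dist :: "'a::real_normed_vector set \<Rightarrow> ereal" where
  "contact_dist S = (INF z\<in>S. ereal (norm z))"

end

theory Submission
  imports Defs
begin

(* R_C \<ge> s holds iff no translated cluster x_i + Phi_d^(i) meets the open ball B(0,s). Given
  the parents, the daughter processes are independent, so this has conditional probability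
  prod_i exp (- ld |B(-x_i,s) \<inter> B(0,rd)|). Each factor is at least c = exp (- ld v_n min(s,rd)^n),
  equals c for parents with |x_i| < |s - rd| and equals 1 for parents with |x_i| \<ge> s + rd.
  So the conditional probability lies between c^N(B(0,s+rd)) and c^N(B(0,|s-rd|)), N the parent
  count, and averaging with the Poisson generating function E c^N(B) = exp (- lp |B| (1 - c))
  bounds P(R_C \<ge> s) from both sides. Since R_C is an infimum, P(R_C \<le> r) is bounded above
  through the balls of radius s > r and the limit s \<rightarrow> r. *)

section \<open>Point configurations\<close>

lemma space_pp_sets [simp]: "space pp_sets = UNIV"
  unfolding pp_sets_def by (simp add: space_measure_of_conv)

lemma pred_count_pts_eq [measurable]:
  "B \<in> sets borel \<Longrightarrow> Measurable.pred pp_sets (\<lambda>S. count_pts S B = k)"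
  unfolding pred_def pp_sets_def by (subst sets_measure_of) auto

lemma count_pts_eq_0_iff: "count_pts S B = 0 \<longleftrightarrow> S \<inter> B = {}"
  unfolding count_pts_def by (auto simp: zero_enat_def)

lemma count_pts_eq_enat_iff: "count_pts S B = enat k \<longleftrightarrow> finite (S \<inter> B) \<and> card (S \<inter> B) = k"
  unfolding count_pts_def by auto

lemma pred_Int_eq_empty [measurable]:
  "B \<in> sets borel \<Longrightarrow> Measurable.pred pp_sets (\<lambda>S. S \<inter> B = {})"
  using pred_count_pts_eq[of B 0] by (simp add: count_pts_eq_0_iff)

lemma Int_eq_empty_sets_pp_sets:
  "B \<in> sets borel \<Longrightarrow> {S. S \<inter> B = {}} \<in> sets pp_sets"
  using pred_Int_eq_empty[of B] by (simp add: pred_def)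

lemma Int_ball_neq_empty_iff_dense:
  fixes q :: "nat \<Rightarrow> 'a::metric_space"
  assumes dense: "\<And>U. open U \<Longrightarrow> U \<noteq> {} \<Longrightarrow> \<exists>i. q i \<in> U"
  shows "S \<inter> ball y s \<noteq> {} \<longleftrightarrow>
    (\<exists>i n. dist y (q i) < 1 / Suc n \<and> S \<inter> ball (q i) (s - 1 / Suc n) \<noteq> {})"
proof
  assume "S \<inter> ball y s \<noteq> {}"
  then obtain z where z: "z \<in> S" "dist y z < s"
    by auto
  then obtain n :: nat where n: "inverse (Suc n) < (s - dist y z) / 2"
    using reals_Archimedean[of "(s - dist y z) / 2"] by auto
  obtain i where i: "dist y (q i) < 1 / Suc n"
    using dense[of "ball y (1 / Suc n)"] by auto
  have "dist (q i) z \<le> dist y (q i) + dist y z"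
    by (metis dist_commute dist_triangle)
  then have "z \<in> ball (q i) (s - 1 / Suc n)"
    using i n by (simp add: inverse_eq_divide)
  then show "\<exists>i n. dist y (q i) < 1 / Suc n \<and> S \<inter> ball (q i) (s - 1 / Suc n) \<noteq> {}"
    using i z by blast
next
  assume "\<exists>i n. dist y (q i) < 1 / Suc n \<and> S \<inter> ball (q i) (s - 1 / Suc n) \<noteq> {}"
  then obtain i n z where "dist y (q i) < 1 / Suc n" "z \<in> S" "dist (q i) z < s - 1 / Suc n"
    by auto
  moreover have "dist y z \<le> dist y (q i) + dist (q i) z"
    by (rule dist_triangle)
  ultimately show "S \<inter> ball y s \<noteq> {}"
    by auto
qed

lemma pred_Int_ball_eq_empty [measurable]:
  fixes f :: "'b \<Rightarrow> 'a::{metric_space, second_countable_topology}"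
  assumes [measurable]: "f \<in> borel_measurable N" "g \<in> measurable N pp_sets"
  shows "Measurable.pred N (\<lambda>\<omega>. g \<omega> \<inter> ball (f \<omega>) s = {})"
proof -
  \<comment> \<open>The events of \<open>pp_sets\<close> only count points in fixed Borel sets, so the moving ball is
    approximated through a countable dense set.\<close>
  obtain Q :: "'a set" where "countable Q" and Q: "\<And>U. open U \<Longrightarrow> U \<noteq> {} \<Longrightarrow> \<exists>q\<in>Q. q \<in> U"
    using countable_dense_exists by blast
  moreover have "Q \<noteq> {}"
    using Q[of UNIV] by auto
  ultimately have dense: "\<exists>i. from_nat_into Q i \<in> U" if "open U" "U \<noteq> {}" for U
    using Q[OF that] by (metis from_nat_into_surj)
  have "g \<omega> \<inter> ball (f \<omega>) s = {} \<longleftrightarrow> \<not> (\<exists>i n. dist (f \<omega>) (from_nat_into Q i) < 1 / Suc n \<and>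
      g \<omega> \<inter> ball (from_nat_into Q i) (s - 1 / Suc n) \<noteq> {})" for \<omega>
    using Int_ball_neq_empty_iff_dense[OF dense] by blast
  then show ?thesis
    by simp measurable
qed

section \<open>Conditioning on an independent component\<close>

lemma (in prob_space) distr_pair_indep_set:
  assumes X: "random_variable S X" and Y: "random_variable T Y"
    and indep: "indep_set (sets (vimage_algebra (space M) X S)) (sets (vimage_algebra (space M) Y T))"
  shows "distr M S X \<Otimes>\<^sub>M distr M T Y = distr M (S \<Otimes>\<^sub>M T) (\<lambda>\<omega>. (X \<omega>, Y \<omega>))"
proof (rule pair_measure_eqI)
  show "sigma_finite_measure (distr M S X)" "sigma_finite_measure (distr M T Y)"
    using X Y by (auto intro!: prob_space_imp_sigma_finite prob_space_distr)
  have XY: "(\<lambda>\<omega>. (X \<omega>, Y \<omega>)) \<in> measurable M (S \<Otimes>\<^sub>M T)"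
    using X Y by (rule measurable_Pair)
  fix A B
  assume "A \<in> sets (distr M S X)" "B \<in> sets (distr M T Y)"
  then have A: "A \<in> sets S" and B: "B \<in> sets T"
    by simp_all
  have "(\<lambda>\<omega>. (X \<omega>, Y \<omega>)) -` (A \<times> B) \<inter> space M = (X -` A \<inter> space M) \<inter> (Y -` B \<inter> space M)"
    by auto
  moreover have "prob ((X -` A \<inter> space M) \<inter> (Y -` B \<inter> space M)) = prob (X -` A \<inter> space M) * prob (Y -` B \<inter> space M)"
    using A B by (intro indep_setD[OF indep] in_vimage_algebra)
  ultimately show "emeasure (distr M S X) A * emeasure (distr M T Y) B
      = emeasure (distr M (S \<Otimes>\<^sub>M T) (\<lambda>\<omega>. (X \<omega>, Y \<omega>))) (A \<times> B)"
    using A B X Y XY by (simp add: emeasure_distr emeasure_eq_measure ennreal_mult)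
qed simp

lemma (in prob_space) emeasure_pair_indep_set:
  assumes X: "random_variable S X" and Y: "random_variable T Y"
    and indep: "indep_set (sets (vimage_algebra (space M) X S)) (sets (vimage_algebra (space M) Y T))"
    and P: "Measurable.pred (S \<Otimes>\<^sub>M T) P"
  shows "emeasure M {\<omega> \<in> space M. P (X \<omega>, Y \<omega>)}
           = (\<integral>\<^sup>+\<omega>. emeasure M {\<omega>' \<in> space M. P (X \<omega>, Y \<omega>')} \<partial>M)"
proof -
  note joint = distr_pair_indep_set[OF X Y indep]
  interpret Y: prob_space "distr M T Y"
    using Y by (rule prob_space_distr)
  define G where "G = {p \<in> space (S \<Otimes>\<^sub>M T). P p}"
  have G: "G \<in> sets (S \<Otimes>\<^sub>M T)"
    using P by (simp add: G_def pred_def)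
  then have G': "G \<in> sets (distr M S X \<Otimes>\<^sub>M distr M T Y)"
    by (simp add: joint)
  have XY: "(\<lambda>\<omega>. (X \<omega>, Y \<omega>)) \<in> measurable M (S \<Otimes>\<^sub>M T)"
    using X Y by (rule measurable_Pair)
  have "emeasure M {\<omega> \<in> space M. P (X \<omega>, Y \<omega>)} = emeasure (distr M (S \<Otimes>\<^sub>M T) (\<lambda>\<omega>. (X \<omega>, Y \<omega>))) G"
    using X Y by (subst emeasure_distr[OF XY G])
      (auto intro!: arg_cong[where f="emeasure M"] simp: G_def space_pair_measure measurable_space)
  also have "\<dots> = (\<integral>\<^sup>+x. emeasure (distr M T Y) (Pair x -` G) \<partial>distr M S X)"
    by (simp only: joint[symmetric] Y.emeasure_pair_measure_alt[OF G'])
  also have "\<dots> = (\<integral>\<^sup>+\<omega>. emeasure (distr M T Y) (Pair (X \<omega>) -` G) \<partial>M)"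
    using Y.measurable_emeasure_Pair[OF G'] by (intro nn_integral_distr[OF X]) simp
  also have "\<dots> = (\<integral>\<^sup>+\<omega>. emeasure M {\<omega>' \<in> space M. P (X \<omega>, Y \<omega>')} \<partial>M)"
  proof (rule nn_integral_cong)
    fix \<omega> assume "\<omega> \<in> space M"
    then show "emeasure (distr M T Y) (Pair (X \<omega>) -` G) = emeasure M {\<omega>' \<in> space M. P (X \<omega>, Y \<omega>')}"
      using X Y by (subst emeasure_distr[OF Y sets_Pair1[OF G]])
        (auto intro!: arg_cong[where f="emeasure M"] simp: G_def space_pair_measure measurable_space)
  qed
  finally show ?thesis .
qed

section \<open>Poisson point processes\<close>

lemma
  assumes "poisson_pp M N mu"
  shows poisson_pp_prob_space: "prob_space M"
    and poisson_pp_measurable: "N \<in> measurable M pp_sets"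
  using assms unfolding poisson_pp_def by auto

lemma poisson_pp_prob_count:
  assumes "poisson_pp M N mu" "B \<in> sets borel" "emeasure mu B < \<infinity>"
  shows "measure M {\<omega> \<in> space M. count_pts (N \<omega>) B = enat k}
           = exp (- measure mu B) * measure mu B ^ k / fact k"
  using assms unfolding poisson_pp_def by blast

lemma poisson_pp_prob_void:
  assumes "poisson_pp M N mu" "B \<in> sets borel" "emeasure mu B < \<infinity>"
  shows "measure M {\<omega> \<in> space M. N \<omega> \<inter> B = {}} = exp (- measure mu B)"
  using poisson_pp_prob_count[OF assms, of 0] by (simp add: count_pts_eq_0_iff zero_enat_def[symmetric])

lemma poisson_pgf_sums:
  fixes c \<mu> :: real
  shows "(\<lambda>k. c ^ k * (exp (- \<mu>) * \<mu> ^ k / fact k)) sums exp (- \<mu> * (1 - c))"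
proof -
  have "(\<lambda>k. exp (- \<mu>) * ((c * \<mu>) ^ k /\<^sub>R fact k)) sums (exp (- \<mu>) * exp (c * \<mu>))"
    by (intro sums_mult exp_converges)
  moreover have "exp (- \<mu>) * exp (c * \<mu>) = exp (- \<mu> * (1 - c))"
    by (simp add: exp_add[symmetric] algebra_simps)
  ultimately show ?thesis
    by (simp add: power_mult_distrib divide_inverse scaleR_conv_of_real mult_ac)
qed

lemma poisson_pp_count_finite_AE:
  assumes pp: "poisson_pp M N mu" and B: "B \<in> sets borel" "emeasure mu B < \<infinity>"
  shows "AE \<omega> in M. count_pts (N \<omega>) B \<noteq> \<infinity>"
proof -
  interpret prob_space M
    by (rule poisson_pp_prob_space[OF pp])
  note [measurable] = poisson_pp_measurable[OF pp] B(1)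
  define A where "A k = {\<omega> \<in> space M. count_pts (N \<omega>) B = enat k}" for k
  have "(\<lambda>k. prob (A k)) sums prob (\<Union>k. A k)"
    by (intro finite_measure_UNION) (auto simp: disjoint_family_on_def A_def)
  moreover have "(\<lambda>k. prob (A k)) sums 1"
    using poisson_pgf_sums[of 1] by (simp add: A_def poisson_pp_prob_count[OF pp B])
  ultimately have "prob (\<Union>k. A k) = 1"
    using sums_unique2 by blast
  from AE_prob_1[OF this] show ?thesis
    by eventually_elim (auto simp: A_def)
qed

lemma poisson_pp_pgf:
  assumes pp: "poisson_pp M N mu" and B: "B \<in> sets borel" "emeasure mu B < \<infinity>" and "0 \<le> c"
  shows "(\<integral>\<^sup>+\<omega>. ennreal (c ^ the_enat (count_pts (N \<omega>) B)) \<partial>M)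
           = ennreal (exp (- measure mu B * (1 - c)))"
proof -
  interpret prob_space M
    by (rule poisson_pp_prob_space[OF pp])
  note [measurable] = poisson_pp_measurable[OF pp] B(1)
  define A where "A k = {\<omega> \<in> space M. count_pts (N \<omega>) B = enat k}" for k
  \<comment> \<open>\<open>the_enat \<infinity>\<close> is unspecified, but the count is finite almost surely.\<close>
  have "AE \<omega> in M. ennreal (c ^ the_enat (count_pts (N \<omega>) B)) = (\<Sum>k. ennreal (c ^ k) * indicator (A k) \<omega>)"
    using poisson_pp_count_finite_AE[OF pp B] AE_space
  proof eventually_elim
    case (elim \<omega>)
    then obtain n where n: "count_pts (N \<omega>) B = enat n"
      by (cases "count_pts (N \<omega>) B") auto
    have "(\<Sum>k. ennreal (c ^ k) * indicator (A k) \<omega>) = (\<Sum>k\<in>{n}. ennreal (c ^ k) * indicator (A k) \<omega>)"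
      by (rule suminf_finite) (auto simp: A_def n)
    then show ?case
      using elim by (simp add: A_def n)
  qed
  then have "(\<integral>\<^sup>+\<omega>. ennreal (c ^ the_enat (count_pts (N \<omega>) B)) \<partial>M)
      = (\<integral>\<^sup>+\<omega>. (\<Sum>k. ennreal (c ^ k) * indicator (A k) \<omega>) \<partial>M)"
    by (rule nn_integral_cong_AE)
  also have "\<dots> = (\<Sum>k. ennreal (c ^ k * prob (A k)))"
    using \<open>0 \<le> c\<close> by (simp add: A_def nn_integral_suminf nn_integral_cmult_indicator emeasure_eq_measure ennreal_mult)
  also have "\<dots> = ennreal (exp (- measure mu B * (1 - c)))"
    using poisson_pgf_sums[of c] \<open>0 \<le> c\<close>
    by (subst suminf_ennreal2) (auto simp: A_def poisson_pp_prob_count[OF pp B] sums_iff)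
  finally show ?thesis .
qed

section \<open>Balls in Euclidean space\<close>

lemma emeasure_density_const_indicator:
  assumes "A \<in> sets M" "K \<in> sets M"
  shows "emeasure (density M (\<lambda>x. c * indicator K x)) A = c * emeasure M (A \<inter> K)"
proof -
  have "emeasure (density M (\<lambda>x. c * indicator K x)) A = (\<integral>\<^sup>+x. c * indicator (A \<inter> K) x \<partial>M)"
    using assms by (subst emeasure_density) (auto intro!: nn_integral_cong split: split_indicator)
  also have "\<dots> = c * emeasure M (A \<inter> K)"
    using assms by (intro nn_integral_cmult_indicator) auto
  finally show ?thesis .
qed

lemma finite_measure_density_indicator_ball:
  fixes a :: "'a::euclidean_space"
  shows "finite_measure (density lborel (\<lambda>x. ennreal c * indicator (ball a r) x))"
proof (rule finite_measureI)
  have "emeasure lborel (ball a r) < \<infinity>"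
    by (rule emeasure_lborel_ball_finite)
  then show "emeasure (density lborel (\<lambda>x. ennreal c * indicator (ball a r) x))
      (space (density lborel (\<lambda>x. ennreal c * indicator (ball a r) x))) \<noteq> \<infinity>"
    by (simp add: emeasure_density_const_indicator ennreal_mult_eq_top_iff)
qed

lemma measure_lborel_ball:
  fixes c :: "'a::euclidean_space"
  assumes "0 \<le> t"
  shows "measure lborel (ball c t) = measure lborel (ball (0::'a) 1) * t ^ DIM('a)"
  using content_ball[OF assms, of c] content_ball[of 1 "0::'a"] by simp

lemma measure_ball_Int_ball_le:
  fixes a b :: "'a::euclidean_space"
  assumes "0 \<le> s" "0 \<le> t"
  shows "measure lborel (ball a s \<inter> ball b t) \<le> measure lborel (ball (0::'a) 1) * min s t ^ DIM('a)"
proof -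
  have ball: "ball c r \<in> fmeasurable lborel" for c :: 'a and r
    using emeasure_lborel_ball_finite by (simp add: fmeasurable_def)
  have "measure lborel (ball a s \<inter> ball b t) \<le> measure lborel (ball a s)"
    and "measure lborel (ball a s \<inter> ball b t) \<le> measure lborel (ball b t)"
    by (rule measure_mono_fmeasurable[OF _ _ ball]; simp)+
  then show ?thesis
    using assms measure_lborel_ball[of s a] measure_lborel_ball[of t b] by (auto simp: min_def)
qed

lemma measure_ball_Int_ball_nested:
  fixes a b :: "'a::euclidean_space"
  assumes "0 \<le> s" "0 \<le> t" "dist a b \<le> \<bar>s - t\<bar>"
  shows "measure lborel (ball a s \<inter> ball b t) = measure lborel (ball (0::'a) 1) * min s t ^ DIM('a)"
proof (cases "s \<le> t")
  case True
  then have "ball a s \<subseteq> ball b t"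
    using assms by (subst ball_subset_ball_iff) auto
  then show ?thesis
    using True assms measure_lborel_ball[of s a] by (simp add: Int_absorb2)
next
  case False
  then have "ball b t \<subseteq> ball a s"
    using assms by (subst ball_subset_ball_iff) (auto simp: dist_commute)
  then show ?thesis
    using False assms measure_lborel_ball[of t b] by (simp add: Int_absorb1)
qed

section \<open>Independent Poisson clusters\<close>

locale poisson_family =
  fixes M :: "'w measure" and D :: "nat \<Rightarrow> 'w \<Rightarrow> 'a::real_normed_vector set" and mu :: "'a measure"
  assumes poisson: "\<And>j. poisson_pp M (D j) mu"
    and indep: "prob_space.indep_vars M (\<lambda>_. pp_sets) D UNIV"
    and finite_intensity: "finite_measure mu"
begin

sublocale prob_space M
  by (rule poisson_pp_prob_space[OF poisson])

lemma measurable_D [measurable]: "D j \<in> measurable M pp_sets"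
  by (rule poisson_pp_measurable[OF poisson])

lemma prob_avoid_ball:
  "prob {\<omega> \<in> space M. D j \<omega> \<inter> ball (- y) s = {}} = exp (- measure mu (ball (- y) s))"
  using poisson_pp_prob_void[OF poisson] finite_measure.emeasure_finite[OF finite_intensity]
  by (simp add: top.not_eq_extremum)

lemma avoid_balls_sets [measurable]:
  "{\<omega> \<in> space M. \<forall>j\<in>J. D j \<omega> \<inter> ball (- x j) s = {}} \<in> events"
  by measurable

lemma prob_avoid_balls_finite:
  assumes "finite J"
  shows "prob {\<omega> \<in> space M. \<forall>j\<in>J. D j \<omega> \<inter> ball (- x j) s = {}}
           = (\<Prod>j\<in>J. exp (- measure mu (ball (- x j) s)))"
proof (cases "J = {}")
  case False
  define A where "A j = {\<omega> \<in> space M. D j \<omega> \<inter> ball (- x j) s = {}}" for j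
  have "indep_sets (\<lambda>j. {D j -` A \<inter> space M | A. A \<in> sets pp_sets}) UNIV"
    using indep unfolding indep_vars_def2 by blast
  then have "prob (\<Inter>j\<in>J. A j) = (\<Prod>j\<in>J. prob (A j))"
  proof (rule indep_setsD)
    show "\<forall>j\<in>J. A j \<in> {D j -` A \<inter> space M | A. A \<in> sets pp_sets}"
    proof
      fix j
      have "A j = D j -` {S. S \<inter> ball (- x j) s = {}} \<inter> space M"
        by (auto simp: A_def)
      moreover have "{S. S \<inter> ball (- x j) s = {}} \<in> sets pp_sets"
        by (rule Int_eq_empty_sets_pp_sets) simp
      ultimately show "A j \<in> {D j -` A \<inter> space M | A. A \<in> sets pp_sets}"
        by blast
    qed
  qed (use False assms in auto)
  moreover have "(\<Inter>j\<in>J. A j) = {\<omega> \<in> space M. \<forall>j\<in>J. D j \<omega> \<inter> ball (- x j) s = {}}"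
    using False unfolding A_def by blast
  ultimately show ?thesis
    by (simp add: A_def prob_avoid_ball)
qed (simp add: prob_space)

lemma prob_avoid_balls_le:
  assumes count: "count_pts (range x) B = enat k"
    and near: "\<And>y. y \<in> B \<Longrightarrow> m \<le> measure mu (ball (- y) s)"
  shows "prob {\<omega> \<in> space M. \<forall>i. D i \<omega> \<inter> ball (- x i) s = {}} \<le> exp (- m) ^ k"
proof -
  obtain J where J: "inj_on x J" "range x \<inter> B = x ` J"
    using subset_image_inj[of "range x \<inter> B" x UNIV] by auto
  moreover have "finite (range x \<inter> B)" "card (range x \<inter> B) = k"
    using count by (simp_all add: count_pts_eq_enat_iff)
  ultimately have J_fin: "finite J" and J_card: "card J = k"
    by (auto simp: finite_image_iff card_image)
  have "prob {\<omega> \<in> space M. \<forall>i. D i \<omega> \<inter> ball (- x i) s = {}}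
      \<le> prob {\<omega> \<in> space M. \<forall>j\<in>J. D j \<omega> \<inter> ball (- x j) s = {}}"
    by (rule finite_measure_mono[OF _ avoid_balls_sets]) auto
  also have "\<dots> = (\<Prod>j\<in>J. exp (- measure mu (ball (- x j) s)))"
    by (rule prob_avoid_balls_finite[OF J_fin])
  also have "\<dots> \<le> (\<Prod>j\<in>J. exp (- m))"
    using J near by (intro prod_mono) auto
  finally show ?thesis
    using J_card by simp
qed

lemma prob_avoid_balls_ge:
  assumes "inj x" and count: "count_pts (range x) B = enat k"
    and bound: "\<And>y. measure mu (ball (- y) s) \<le> m"
    and far: "\<And>y. y \<notin> B \<Longrightarrow> measure mu (ball (- y) s) = 0"
  shows "exp (- m) ^ k \<le> prob {\<omega> \<in> space M. \<forall>i. D i \<omega> \<inter> ball (- x i) s = {}}"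
proof -
  define E where "E n = {\<omega> \<in> space M. \<forall>i\<in>{..<n}. D i \<omega> \<inter> ball (- x i) s = {}}" for n
  have "(\<lambda>n. prob (E n)) \<longlonglongrightarrow> prob (\<Inter>n. E n)"
    using avoid_balls_sets by (intro finite_Lim_measure_decseq) (auto simp: E_def decseq_def)
  moreover have "(\<Inter>n. E n) = {\<omega> \<in> space M. \<forall>i. D i \<omega> \<inter> ball (- x i) s = {}}"
    by (auto simp: E_def)
  moreover have "exp (- m) ^ k \<le> prob (E n)" for n
  proof -
    have "finite (range x \<inter> B)" "card (range x \<inter> B) = k"
      using count by (simp_all add: count_pts_eq_enat_iff)
    then have "card {i \<in> {..<n}. x i \<in> B} \<le> k"
      using card_inj_on_le[of x "{i \<in> {..<n}. x i \<in> B}" "range x \<inter> B"] \<open>inj x\<close>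
      by (auto intro: inj_on_subset)
    moreover have "0 \<le> m"
      using bound[of 0] measure_nonneg[of mu "ball (- 0) s"] by linarith
    ultimately have "exp (- m) ^ k \<le> exp (- m) ^ card {i \<in> {..<n}. x i \<in> B}"
      by (intro power_decreasing) auto
    also have "\<dots> = (\<Prod>i<n. if x i \<in> B then exp (- m) else 1)"
      by (simp add: prod.If_cases Int_def)
    also have "\<dots> \<le> (\<Prod>i<n. exp (- measure mu (ball (- x i) s)))"
      using bound far by (intro prod_mono) auto
    also have "\<dots> = prob (E n)"
      unfolding E_def by (rule prob_avoid_balls_finite[symmetric]) simp
    finally show ?thesis .
  qed
  ultimately show ?thesis
    by (metis LIMSEQ_le_const)
qed

end

section \<open>The Matern cluster process\<close>

lemma contact_dist_less_iff:
  "contact_dist (matern_cluster X D \<omega>) < ereal t \<longleftrightarrow> \<not> (\<forall>i. D i \<omega> \<inter> ball (- X i \<omega>) t = {})"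
proof -
  have "D i \<omega> \<inter> ball (- X i \<omega>) t \<noteq> {} \<longleftrightarrow> (\<exists>y\<in>D i \<omega>. norm (X i \<omega> + y) < t)" for i
    by (auto simp: dist_norm simp flip: norm_minus_cancel[of "X i \<omega> + _"])
  then show ?thesis
    unfolding contact_dist_def matern_cluster_def INF_less_iff by auto
qed

lemma ereal_le_iff_less_add_inverse:
  "(a::ereal) \<le> ereal r \<longleftrightarrow> (\<forall>n::nat. a < ereal (r + 1 / Suc n))"
proof
  assume "a \<le> ereal r"
  then show "\<forall>n::nat. a < ereal (r + 1 / Suc n)"
    by (auto intro: le_less_trans)
next
  assume less: "\<forall>n::nat. a < ereal (r + 1 / Suc n)"
  show "a \<le> ereal r"
  proof (rule ereal_le_epsilon2)
    fix e :: real
    assume "0 < e"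
    then obtain n :: nat where "inverse (Suc n) < e"
      using reals_Archimedean by blast
    then have "ereal (r + 1 / Suc n) \<le> ereal r + ereal e"
      by (simp add: inverse_eq_divide)
    then show "a \<le> ereal r + ereal e"
      using less less_imp_le order_trans by blast
  qed
qed

locale matern_cluster_process =
  fixes M :: "'w measure" and X :: "nat \<Rightarrow> 'w \<Rightarrow> 'a::euclidean_space" and D :: "nat \<Rightarrow> 'w \<Rightarrow> 'a set"
    and lp ld rd :: real
  assumes lp: "0 \<le> lp" and ld: "0 \<le> ld" and rd: "0 \<le> rd"
    and parents: "poisson_pp M (\<lambda>\<omega>. range (\<lambda>i. X i \<omega>)) (density lborel (\<lambda>_. ennreal lp))"
    and parents_inj: "AE \<omega> in M. inj (\<lambda>i. X i \<omega>)"
    and daughters: "\<And>j. poisson_pp M (D j) (density lborel (\<lambda>x. ennreal ld * indicator (ball 0 rd) x))"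
    and daughters_indep: "prob_space.indep_vars M (\<lambda>_. pp_sets) D UNIV"
    and measurable_parents [measurable]: "(\<lambda>\<omega> i. X i \<omega>) \<in> measurable M (PiM UNIV (\<lambda>_. borel))"
    and parents_daughters_indep: "prob_space.indep_set M
      (sets (vimage_algebra (space M) (\<lambda>\<omega> i. X i \<omega>) (PiM UNIV (\<lambda>_. borel))))
      (sets (vimage_algebra (space M) (\<lambda>\<omega> j. D j \<omega>) (PiM UNIV (\<lambda>_. pp_sets))))"
begin

sublocale prob_space M
  by (rule poisson_pp_prob_space[OF parents])

sublocale daughters: poisson_family M D "density lborel (\<lambda>x. ennreal ld * indicator (ball 0 rd) x)"
  by (rule poisson_family.intro[OF daughters daughters_indep finite_measure_density_indicator_ball])

lemma daughter_intensity_ball: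
  "measure (density lborel (\<lambda>x. ennreal ld * indicator (ball 0 rd) x)) (ball y s)
     = ld * measure lborel (ball y s \<inter> ball 0 rd)"
  using ld emeasure_density_const_indicator[of "ball y s" lborel "ball 0 rd" "ennreal ld"]
  by (simp add: measure_def enn2real_mult)

lemma parent_intensity_ball_finite:
  "emeasure (density lborel (\<lambda>_. ennreal lp)) (ball (0::'a) t) < \<infinity>"
  using lp emeasure_lborel_ball_finite[of "0::'a" t]
  by (simp add: emeasure_density_const ennreal_mult_less_top)

lemma parents_count_finite_AE: "AE \<omega> in M. count_pts (range (\<lambda>i. X i \<omega>)) (ball 0 t) \<noteq> \<infinity>"
  by (rule poisson_pp_count_finite_AE[OF parents _ parent_intensity_ball_finite]) simp

lemma parents_pgf_ball:
  assumes "0 \<le> t" "0 \<le> c"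
  shows "(\<integral>\<^sup>+\<omega>. ennreal (c ^ the_enat (count_pts (range (\<lambda>i. X i \<omega>)) (ball 0 t))) \<partial>M)
           = ennreal (exp (- measure lborel (ball (0::'a) 1) * lp * t ^ DIM('a) * (1 - c)))"
proof -
  have "measure (density lborel (\<lambda>_. ennreal lp)) (ball (0::'a) t)
      = lp * (measure lborel (ball (0::'a) 1) * t ^ DIM('a))"
    using lp measure_lborel_ball[OF assms(1), of "0::'a"] by (simp add: measure_density_const)
  then show ?thesis
    using poisson_pp_pgf[OF parents _ parent_intensity_ball_finite assms(2)] by (simp add: mult_ac)
qed

\<comment> \<open>\<open>D i \<omega> \<inter> ball (- X i \<omega>) s = {}\<close> says that the translated cluster \<open>X i \<omega> + D i \<omega>\<close> misses \<open>ball 0 s\<close>.\<close>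
definition empty_ball_event :: "real \<Rightarrow> 'w set" where
  "empty_ball_event s = {\<omega> \<in> space M. \<forall>i. D i \<omega> \<inter> ball (- X i \<omega>) s = {}}"

lemma measurable_daughters [measurable]: "(\<lambda>\<omega> j. D j \<omega>) \<in> measurable M (PiM UNIV (\<lambda>_. pp_sets))"
  by (intro measurable_PiM_single' daughters.measurable_D) (simp add: PiE_UNIV_domain)

lemma empty_ball_event_sets [measurable]: "empty_ball_event s \<in> events"
  unfolding empty_ball_event_def by measurable

lemma emeasure_empty_ball_event:
  "emeasure M (empty_ball_event s)
     = (\<integral>\<^sup>+\<omega>. prob {\<omega>' \<in> space M. \<forall>i. D i \<omega>' \<inter> ball (- X i \<omega>) s = {}} \<partial>M)"
proof -
  have "Measurable.pred (PiM UNIV (\<lambda>_. borel) \<Otimes>\<^sub>M PiM UNIV (\<lambda>_. pp_sets))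
      (\<lambda>(x :: nat \<Rightarrow> 'a, d). \<forall>i. d i \<inter> ball (- x i) s = {})"
    by measurable
  from emeasure_pair_indep_set[OF measurable_parents measurable_daughters
      parents_daughters_indep this]
  show ?thesis
    by (simp add: empty_ball_event_def emeasure_eq_measure)
qed

lemma prob_empty_ball_event_le:
  assumes "0 \<le> r"
  shows "prob (empty_ball_event r)
           \<le> exp (- measure lborel (ball (0::'a) 1) * lp * \<bar>r - rd\<bar> ^ DIM('a)
                  * (1 - exp (- ld * measure lborel (ball (0::'a) 1) * min r rd ^ DIM('a))))"
proof -
  define m where "m = ld * measure lborel (ball (0::'a) 1) * min r rd ^ DIM('a)"
  let ?count = "\<lambda>\<omega>. count_pts (range (\<lambda>i. X i \<omega>)) (ball 0 \<bar>r - rd\<bar>)"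
  have "emeasure M (empty_ball_event r) \<le> (\<integral>\<^sup>+\<omega>. ennreal (exp (- m) ^ the_enat (?count \<omega>)) \<partial>M)"
    unfolding emeasure_empty_ball_event
  proof (rule nn_integral_mono_AE)
    show "AE \<omega> in M. ennreal (prob {\<omega>' \<in> space M. \<forall>i. D i \<omega>' \<inter> ball (- X i \<omega>) r = {}})
        \<le> ennreal (exp (- m) ^ the_enat (?count \<omega>))"
      using parents_count_finite_AE[of "\<bar>r - rd\<bar>"]
    proof eventually_elim
      case (elim \<omega>)
      then obtain k where k: "?count \<omega> = enat k"
        by (cases "?count \<omega>") auto
      have "prob {\<omega>' \<in> space M. \<forall>i. D i \<omega>' \<inter> ball (- X i \<omega>) r = {}} \<le> exp (- m) ^ k"
      proof (rule daughters.prob_avoid_balls_le[OF k])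
        fix y :: 'a
        assume "y \<in> ball 0 \<bar>r - rd\<bar>"
        then have "measure lborel (ball (- y) r \<inter> ball 0 rd) = measure lborel (ball (0::'a) 1) * min r rd ^ DIM('a)"
          using assms rd by (intro measure_ball_Int_ball_nested) (auto simp: dist_norm)
        then show "m \<le> measure (density lborel (\<lambda>x. ennreal ld * indicator (ball 0 rd) x)) (ball (- y) r)"
          by (simp add: daughter_intensity_ball m_def)
      qed
      then show ?case
        by (simp add: k)
    qed
  qed
  also have "\<dots> = ennreal (exp (- measure lborel (ball (0::'a) 1) * lp * \<bar>r - rd\<bar> ^ DIM('a) * (1 - exp (- m))))"
    by (rule parents_pgf_ball) simp_all
  finally show ?thesis
    by (simp add: emeasure_eq_measure m_def)
qed

lemma prob_empty_ball_event_ge: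
  assumes "0 \<le> s"
  shows "exp (- measure lborel (ball (0::'a) 1) * lp * (s + rd) ^ DIM('a)
              * (1 - exp (- measure lborel (ball (0::'a) 1) * ld * min s rd ^ DIM('a))))
           \<le> prob (empty_ball_event s)"
proof -
  define m where "m = measure lborel (ball (0::'a) 1) * ld * min s rd ^ DIM('a)"
  let ?count = "\<lambda>\<omega>. count_pts (range (\<lambda>i. X i \<omega>)) (ball 0 (s + rd))"
  have "ennreal (exp (- measure lborel (ball (0::'a) 1) * lp * (s + rd) ^ DIM('a) * (1 - exp (- m))))
      = (\<integral>\<^sup>+\<omega>. ennreal (exp (- m) ^ the_enat (?count \<omega>)) \<partial>M)"
    using assms rd by (intro parents_pgf_ball[symmetric]) simp_all
  also have "\<dots> \<le> emeasure M (empty_ball_event s)"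
    unfolding emeasure_empty_ball_event
  proof (rule nn_integral_mono_AE)
    show "AE \<omega> in M. ennreal (exp (- m) ^ the_enat (?count \<omega>))
        \<le> ennreal (prob {\<omega>' \<in> space M. \<forall>i. D i \<omega>' \<inter> ball (- X i \<omega>) s = {}})"
      using parents_count_finite_AE[of "s + rd"] parents_inj
    proof eventually_elim
      case (elim \<omega>)
      then obtain k where k: "?count \<omega> = enat k"
        by (cases "?count \<omega>") auto
      have "exp (- m) ^ k \<le> prob {\<omega>' \<in> space M. \<forall>i. D i \<omega>' \<inter> ball (- X i \<omega>) s = {}}"
      proof (rule daughters.prob_avoid_balls_ge[OF _ k])
        show "inj (\<lambda>i. X i \<omega>)"
          using elim by blast
        fix y :: 'a
        have "ld * measure lborel (ball (- y) s \<inter> ball 0 rd) \<le> m"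
          using measure_ball_Int_ball_le[of s rd "- y" 0] assms rd ld
          by (simp add: m_def mult_left_mono mult_ac)
        then show "measure (density lborel (\<lambda>x. ennreal ld * indicator (ball 0 rd) x)) (ball (- y) s) \<le> m"
          by (simp add: daughter_intensity_ball)
        assume "y \<notin> ball 0 (s + rd)"
        then have "ball (- y) s \<inter> ball 0 rd = {}"
          by (intro disjoint_ballI) (simp add: dist_norm)
        then show "measure (density lborel (\<lambda>x. ennreal ld * indicator (ball 0 rd) x)) (ball (- y) s) = 0"
          by (simp add: daughter_intensity_ball)
      qed
      then show ?case
        by (simp add: k)
    qed
  qed
  finally show ?thesis
    by (simp add: emeasure_eq_measure m_def)
qed

lemma contact_dist_less_event:
  "{\<omega> \<in> space M. contact_dist (matern_cluster X D \<omega>) < ereal s} = space M - empty_ball_event s"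
  by (auto simp: contact_dist_less_iff empty_ball_event_def)

lemma contact_dist_le_event_sets:
  "{\<omega> \<in> space M. contact_dist (matern_cluster X D \<omega>) \<le> ereal r} \<in> events"
proof -
  have "{\<omega> \<in> space M. contact_dist (matern_cluster X D \<omega>) \<le> ereal r}
      = {\<omega> \<in> space M. \<forall>n::nat. \<omega> \<notin> empty_ball_event (r + 1 / Suc n)}"
    by (auto simp: ereal_le_iff_less_add_inverse contact_dist_less_iff empty_ball_event_def)
  then show ?thesis
    by simp measurable
qed

lemma prob_contact_dist_le_ge:
  "1 - prob (empty_ball_event r)
     \<le> prob {\<omega> \<in> space M. contact_dist (matern_cluster X D \<omega>) \<le> ereal r}"
proof -
  have "space M - empty_ball_event r \<subseteq> {\<omega> \<in> space M. contact_dist (matern_cluster X D \<omega>) \<le> ereal r}"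
    by (auto simp flip: contact_dist_less_event)
  then have "prob (space M - empty_ball_event r)
      \<le> prob {\<omega> \<in> space M. contact_dist (matern_cluster X D \<omega>) \<le> ereal r}"
    by (rule finite_measure_mono[OF _ contact_dist_le_event_sets])
  then show ?thesis
    by (simp add: prob_compl)
qed

lemma prob_contact_dist_le_le:
  assumes "r < s"
  shows "prob {\<omega> \<in> space M. contact_dist (matern_cluster X D \<omega>) \<le> ereal r}
           \<le> 1 - prob (empty_ball_event s)"
proof -
  have "{\<omega> \<in> space M. contact_dist (matern_cluster X D \<omega>) \<le> ereal r} \<subseteq> space M - empty_ball_event s"
    using assms by (auto simp flip: contact_dist_less_event intro: le_less_trans)
  then have "prob {\<omega> \<in> space M. contact_dist (matern_cluster X D \<omega>) \<le> ereal r}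
      \<le> prob (space M - empty_ball_event s)"
    by (rule finite_measure_mono) simp
  then show ?thesis
    by (simp add: prob_compl)
qed

end

theorem theorem3:
  fixes M :: "'w measure"
    and X :: "nat \<Rightarrow> 'w \<Rightarrow> 'a::euclidean_space"
    and D :: "nat \<Rightarrow> 'w \<Rightarrow> 'a set"
    and lp ld rd r :: real
  assumes "prob_space M"
    and "lp > 0" and "ld > 0" and "rd > 0" and "r > 0"
    and parents: "poisson_pp M (\<lambda>\<omega>. range (\<lambda>i. X i \<omega>)) (density lborel (\<lambda>_. ennreal lp))"
    and enum: "AE \<omega> in M. inj (\<lambda>i. X i \<omega>)"
    and daughters: "\<And>j. poisson_pp M (D j)
                         (density lborel (\<lambda>x. ennreal ld * indicator (ball (0::'a) rd) x))"
    and indep_d: "prob_space.indep_vars M (\<lambda>_. pp_sets) D UNIV"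
    and meas_p: "(\<lambda>\<omega> i. X i \<omega>) \<in> measurable M (PiM UNIV (\<lambda>_. borel))"
    and indep_pd: "prob_space.indep_set M
                     (sets (vimage_algebra (space M) (\<lambda>\<omega> i. X i \<omega>) (PiM UNIV (\<lambda>_. borel))))
                     (sets (vimage_algebra (space M) (\<lambda>\<omega> j. D j \<omega>) (PiM UNIV (\<lambda>_. pp_sets))))"
  shows "1 - exp (- measure lborel (ball (0::'a) 1) * lp * \<bar>r - rd\<bar> ^ DIM('a)
              * (1 - exp (- ld * measure lborel (ball (0::'a) 1) * min r rd ^ DIM('a))))
           \<le> measure M {\<omega> \<in> space M. contact_dist (matern_cluster X D \<omega>) \<le> ereal r}
       \<and> measure M {\<omega> \<in> space M. contact_dist (matern_cluster X D \<omega>) \<le> ereal r}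
           \<le> 1 - exp (- measure lborel (ball (0::'a) 1) * lp * (r + rd) ^ DIM('a)
              * (1 - exp (- measure lborel (ball (0::'a) 1) * ld * min r rd ^ DIM('a))))"
proof -
  interpret matern_cluster_process M X D lp ld rd
    by unfold_locales (use assms in auto)
  let ?C = "{\<omega> \<in> space M. contact_dist (matern_cluster X D \<omega>) \<le> ereal r}"
  define F where "F s = 1 - exp (- measure lborel (ball (0::'a) 1) * lp * (s + rd) ^ DIM('a)
    * (1 - exp (- measure lborel (ball (0::'a) 1) * ld * min s rd ^ DIM('a))))" for s
  have upper: "\<forall>\<^sub>F s in at_right r. measure M ?C \<le> F s"
    using eventually_at_right_less
  proof eventually_elim
    case (elim s)
    then show ?case
      using prob_contact_dist_le_le[OF elim] prob_empty_ball_event_ge[of s] \<open>r > 0\<close>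
      by (simp add: F_def)
  qed
  have "(F \<longlongrightarrow> F r) (at_right r)"
    unfolding F_def by (intro tendsto_intros)
  then have "measure M ?C \<le> F r"
    using upper by (rule tendsto_lowerbound) simp
  then show ?thesis
    using prob_contact_dist_le_ge[of r] prob_empty_ball_event_le[of r] \<open>r > 0\<close>
    by (simp add: F_def)
qed

end
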